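(* Let $\xi\in\mathbb{S}^{N-1}$ and $\xi^\perp=I-\xi\otimes\xi$. (i) For $v\in\mathbb{R}^N$: $\xi\vee v\le0$ if and only if ($v=(\xi^\top v)\xi$ and $\xi^\top v\le0$), if and only if ($\xi^\perp v=0$ and $\xi^\top v\le0$), if and only if $v=-|v|\xi$. (ii) For $\mathbf{X}\in\mathbb{R}^N\otimes\mathbb{R}^{n\times n}_s$: $\xi\vee\mathbf{X}\le_\otimes0$ if and only if ($\mathbf{X}=\xi\otimes(\xi^\top\mathbf{X})$ and $\xi^\top\mathbf{X}\le0$), if and only if ($\xi^\perp\mathbf{X}=0$ and $\xi^\top\mathbf{X}\le0$), if and only if $\xi\vee\mathbf{X}\le0$. In particular, for every $\eta\in\mathbb{R}^N$ and $\mathbf{Y}\in\mathbb{R}^N\otimes\mathbb{R}^{n\times n}_s$, $\eta\vee\mathbf{Y}\le_\otimes0$ if and only if $\eta\vee\mathbf{Y}\le0$.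
   Context: Summation over repeated indices. For $a,b\in\mathbb{R}^N$, $a\vee b:=\frac12(a\otimes b+b\otimes a)\in\mathbb{R}^{N\times N}_s$, with inequalities of symmetric matrices in the sense of quadratic forms. $\mathbb{R}^N\otimes\mathbb{R}^{n\times n}_s$: arrays $\mathbf{X}=(\mathbf{X}_{\alpha ij})$ symmetric in $i,j$. $\xi^\top\mathbf{X}:=(\xi_\alpha\mathbf{X}_{\alpha ij})\in\mathbb{R}^{n\times n}_s$ (with $\le0$ meaning negative semidefinite), $\xi^\perp\mathbf{X}:=((\xi^\perp)_{\alpha\beta}\mathbf{X}_{\beta ij})$, $\xi\otimes A:=(\xi_\alpha A_{ij})$. $\xi\vee\mathbf{X}$ is the fourth-order tensor with components $\frac12(\xi_\alpha\mathbf{X}_{\beta ij}+\xi_\beta\mathbf{X}_{\alpha ij})$ indexed by $(\alpha i,\beta j)$. For a fourth-order tensor $\Xi$: $\Xi\le0$ means $\Xi_{\alpha i\beta j}P_{\alpha i}P_{\beta j}\le0$ for all $P\in\mathbb{R}^{N\times n}$; $\Xi\le_\otimes0$ means $\Xi_{\alpha i\beta j}\eta_\alpha w_i\eta_\beta w_j\le0$ for all $\eta\in\mathbb{R}^N,w\in\mathbb{R}^n$. *)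

theory Defs
  imports "HOL-Analysis.Analysis"
begin

text \<open>Vectors in R^N are real^'N; arrays X in R^N (x) R^{n x n}_s are real^'n^'n^'N,
  with components X $ alpha $ i $ j. Fourth-order tensors indexed by (alpha i, beta j)
  are functions 'N => 'n => 'N => 'n => real.\<close>

definition vee :: "real^'N \<Rightarrow> real^'N \<Rightarrow> real^'N^'N" where
  "vee a b = (\<chi> k l. (a$k * b$l + b$k * a$l) / 2)"

definition mat_nonpos :: "real^'m^'m \<Rightarrow> bool" where
  "mat_nonpos A \<longleftrightarrow> (\<forall>x. x \<bullet> (A *v x) \<le> 0)"

definition xi_perp_mat :: "real^'N \<Rightarrow> real^'N^'N" where
  "xi_perp_mat xi = mat 1 - (\<chi> a b. xi$a * xi$b)"

definition sym_array :: "real^'n^'n^'N \<Rightarrow> bool" where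
  "sym_array X \<longleftrightarrow> (\<forall>a i j. X$a$i$j = X$a$j$i)"

definition xi_top :: "real^'N \<Rightarrow> real^'n^'n^'N \<Rightarrow> real^'n^'n" where
  "xi_top xi X = (\<chi> i j. \<Sum>a\<in>UNIV. xi$a * X$a$i$j)"

definition xi_perp_arr :: "real^'N \<Rightarrow> real^'n^'n^'N \<Rightarrow> real^'n^'n^'N" where
  "xi_perp_arr xi X = (\<chi> a i j. \<Sum>b\<in>UNIV. xi_perp_mat xi $a$b * X$b$i$j)"

definition otimes_vm :: "real^'N \<Rightarrow> real^'n^'n \<Rightarrow> real^'n^'n^'N" where
  "otimes_vm xi A = (\<chi> a i j. xi$a * A$i$j)"

definition vee4 :: "real^'N \<Rightarrow> real^'n^'n^'N \<Rightarrow> 'N \<Rightarrow> 'n \<Rightarrow> 'N \<Rightarrow> 'n \<Rightarrow> real" where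
  "vee4 xi X a i b j = (xi$a * X$b$i$j + xi$b * X$a$i$j) / 2"

definition tensor_nonpos :: "('N::finite \<Rightarrow> 'n::finite \<Rightarrow> 'N \<Rightarrow> 'n \<Rightarrow> real) \<Rightarrow> bool" where
  "tensor_nonpos T \<longleftrightarrow> (\<forall>P :: real^'n^'N.
     (\<Sum>a\<in>UNIV. \<Sum>i\<in>UNIV. \<Sum>b\<in>UNIV. \<Sum>j\<in>UNIV. T a i b j * P$a$i * P$b$j) \<le> 0)"

definition tensor_nonpos_otimes :: "('N::finite \<Rightarrow> 'n::finite \<Rightarrow> 'N \<Rightarrow> 'n \<Rightarrow> real) \<Rightarrow> bool" where
  "tensor_nonpos_otimes T \<longleftrightarrow> (\<forall>(eta :: real^'N) (w :: real^'n).
     (\<Sum>a\<in>UNIV. \<Sum>i\<in>UNIV. \<Sum>b\<in>UNIV. \<Sum>j\<in>UNIV.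
        T a i b j * eta$a * w$i * eta$b * w$j) \<le> 0)"

end

theory Submission
  imports Defs
begin

(*
  Everything rests on the identity x \<bullet> ((\<xi> \<or> v) x) = (\<xi> \<bullet> x) (v \<bullet> x): this product
  is nonpositive for all x iff v is a nonpositive multiple of \<xi>.

  Testing \<xi> \<or> X against a simple tensor \<eta> \<otimes> w gives (\<xi> \<bullet> \<eta>) (\<eta> \<bullet> X[w,w]), where
  X[w,w] = (w\<^sup>T X\<^sub>\<beta> w)\<^sub>\<beta>.  Hence \<xi> \<or> X \<le>\<^sub>\<otimes> 0 says that each X[w,w] is a nonpositive
  multiple c(w) \<xi>; the symmetric slices X\<^sub>\<beta> - \<xi>\<^sub>\<beta> A with A = \<xi>\<^sup>T X / |\<xi>|\<^sup>2 then have
  vanishing quadratic form, so by polarization X = \<xi> \<otimes> A, and A \<le> 0 because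
  w\<^sup>T A w = c(w).  Conversely, for X = \<xi> \<otimes> A the full quadratic form of \<xi> \<or> X at P
  is p\<^sup>T A p with p = P\<^sup>T \<xi>, so \<xi> \<or> X \<le> 0.  None of this needs |\<xi>| = 1, which gives the
  final claim for every \<eta> \<noteq> 0; for \<eta> = 0 both sides are trivial.
*)

lemma inner_vee_mult: "x \<bullet> (vee a b *v x) = (a \<bullet> x) * (b \<bullet> x)"
proof -
  have "x \<bullet> (vee a b *v x) = (\<Sum>k\<in>UNIV. \<Sum>l\<in>UNIV. (a$k * x$k) * (b$l * x$l) + (b$k * x$k) * (a$l * x$l)) / 2"
    by (simp add: vee_def matrix_vector_mult_def inner_vec_def sum_distrib_left sum_divide_distrib field_simps)
  also have "\<dots> = ((a \<bullet> x) * (b \<bullet> x) + (b \<bullet> x) * (a \<bullet> x)) / 2"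
    by (simp add: inner_vec_def sum.distrib sum_product)
  also have "\<dots> = (a \<bullet> x) * (b \<bullet> x)"
    by simp
  finally show ?thesis .
qed

lemma mat_nonpos_vee_iff:
  fixes eta v :: "real^'N"
  assumes "eta \<noteq> 0"
  shows "mat_nonpos (vee eta v) \<longleftrightarrow> (\<exists>c \<le> 0. v = c *\<^sub>R eta)"
proof
  assume "mat_nonpos (vee eta v)"
  then have form: "(eta \<bullet> x) * (v \<bullet> x) \<le> 0" for x
    by (simp add: mat_nonpos_def inner_vee_mult)
  have ee: "eta \<bullet> eta > 0"
    using assms by simp
  define c where "c = (eta \<bullet> v) / (eta \<bullet> eta)"
  define w where "w = v - c *\<^sub>R eta"
  have v: "v = c *\<^sub>R eta + w"
    by (simp add: w_def)
  have ew: "eta \<bullet> w = 0"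
    using ee by (simp add: w_def c_def inner_diff_right)
  have "c \<le> 0"
    using form[of eta] ee by (simp add: c_def inner_commute mult_le_0_iff divide_nonpos_pos)
  moreover have "w = 0"
  proof (rule ccontr)
    assume "w \<noteq> 0"
    then have ww: "w \<bullet> w > 0"
      by simp
    \<comment> \<open>test the form at a point where v has inner product 1\<close>
    define t where "t = (1 - c * (eta \<bullet> eta)) / (w \<bullet> w)"
    have "v \<bullet> (eta + t *\<^sub>R w) = 1"
      using ww ew by (simp add: v t_def inner_add_left inner_add_right inner_commute[of w eta])
    then show False
      using form[of "eta + t *\<^sub>R w"] ee ew by (simp add: inner_add_right)
  qed
  ultimately show "\<exists>c \<le> 0. v = c *\<^sub>R eta"
    using v by auto
next
  assume "\<exists>c \<le> 0. v = c *\<^sub>R eta"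
  then obtain c where "c \<le> 0" "v = c *\<^sub>R eta"
    by blast
  then show "mat_nonpos (vee eta v)"
    by (simp add: mat_nonpos_def inner_vee_mult mult.left_commute[of _ c] mult_nonpos_nonneg
        flip: power2_eq_square)
qed

lemma unit_nonpos_multiple_iff:
  fixes xi :: "real^'N"
  assumes "norm xi = 1"
  shows "(\<exists>c \<le> 0. v = c *\<^sub>R xi) \<longleftrightarrow> v = (xi \<bullet> v) *\<^sub>R xi \<and> xi \<bullet> v \<le> 0"
proof
  assume "\<exists>c \<le> 0. v = c *\<^sub>R xi"
  then obtain c where "c \<le> 0" and "v = c *\<^sub>R xi"
    by blast
  then show "v = (xi \<bullet> v) *\<^sub>R xi \<and> xi \<bullet> v \<le> 0"
    using assms by (simp add: norm_eq_1)
qed blast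

lemma unit_nonpos_multiple_iff_neg_norm:
  fixes xi :: "real^'N"
  assumes "norm xi = 1"
  shows "(v = (xi \<bullet> v) *\<^sub>R xi \<and> xi \<bullet> v \<le> 0) \<longleftrightarrow> v = - (norm v *\<^sub>R xi)"
proof
  assume "v = (xi \<bullet> v) *\<^sub>R xi \<and> xi \<bullet> v \<le> 0"
  then have v: "v = (xi \<bullet> v) *\<^sub>R xi" and nonpos: "xi \<bullet> v \<le> 0"
    by blast+
  have "norm v = - (xi \<bullet> v)"
    using arg_cong[OF v, of norm] assms nonpos by simp
  then show "v = - (norm v *\<^sub>R xi)"
    using v by (metis minus_minus scaleR_minus_left)
next
  assume v: "v = - (norm v *\<^sub>R xi)"
  have "xi \<bullet> v = - norm v"
    using arg_cong[OF v, of "inner xi"] assms by (simp add: norm_eq_1)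
  then show "v = (xi \<bullet> v) *\<^sub>R xi \<and> xi \<bullet> v \<le> 0"
    using v by (metis neg_le_0_iff_le norm_ge_zero scaleR_minus_left)
qed

lemma xi_perp_mat_mult: "xi_perp_mat xi *v v = v - (xi \<bullet> v) *\<^sub>R xi"
proof -
  have "(\<chi> a b. xi$a * xi$b) *v v = (xi \<bullet> v) *\<^sub>R xi"
    by (simp add: vec_eq_iff matrix_vector_mult_def inner_vec_def sum_distrib_left algebra_simps)
  then show ?thesis
    by (simp add: xi_perp_mat_def matrix_vector_mult_diff_rdistrib)
qed

lemma xi_perp_arr_eq: "xi_perp_arr xi X = X - otimes_vm xi (xi_top xi X)"
proof -
  have "xi_perp_arr xi X $a$i$j = (xi_perp_mat xi *v (\<chi> b. X$b$i$j)) $ a" for a i j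
    by (simp add: xi_perp_arr_def matrix_vector_mult_def)
  then show ?thesis
    by (simp add: vec_eq_iff xi_perp_mat_mult otimes_vm_def xi_top_def inner_vec_def mult.commute)
qed

lemma xi_top_otimes_vm: "xi_top xi (otimes_vm xi A) = (xi \<bullet> xi) *\<^sub>R A"
  by (simp add: vec_eq_iff xi_top_def otimes_vm_def inner_vec_def sum_distrib_right mult.assoc)

definition array_form :: "real^'n^'n^'N \<Rightarrow> real^'n \<Rightarrow> real^'N" where
  "array_form X w = (\<chi> b. w \<bullet> (X$b *v w))"

lemma inner_xi_top_mult: "w \<bullet> (xi_top xi X *v w) = xi \<bullet> array_form X w"
proof -
  have "w \<bullet> (xi_top xi X *v w) = (\<Sum>i\<in>UNIV. \<Sum>j\<in>UNIV. \<Sum>b\<in>UNIV. xi$b * (w$i * X$b$i$j * w$j))"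
    by (simp add: xi_top_def inner_vec_def matrix_vector_mult_def sum_distrib_left sum_distrib_right mult_ac)
  also have "\<dots> = (\<Sum>i\<in>UNIV. \<Sum>b\<in>UNIV. \<Sum>j\<in>UNIV. xi$b * (w$i * X$b$i$j * w$j))"
    by (intro sum.cong refl sum.swap)
  also have "\<dots> = (\<Sum>b\<in>UNIV. \<Sum>i\<in>UNIV. \<Sum>j\<in>UNIV. xi$b * (w$i * X$b$i$j * w$j))"
    by (rule sum.swap)
  also have "\<dots> = xi \<bullet> array_form X w"
    by (simp add: array_form_def inner_vec_def matrix_vector_mult_def sum_distrib_left mult_ac)
  finally show ?thesis .
qed

lemma vee4_form_eq_rows:
  fixes P :: "real^'n^'N"
  shows "(\<Sum>a\<in>UNIV. \<Sum>i\<in>UNIV. \<Sum>b\<in>UNIV. \<Sum>j\<in>UNIV. vee4 xi X a i b j * P$a$i * P$b$j)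
       = (\<Sum>a\<in>UNIV. \<Sum>b\<in>UNIV. (xi$a * (P$a \<bullet> (X$b *v P$b)) + xi$b * (P$a \<bullet> (X$a *v P$b))) / 2)"
proof -
  have "(\<Sum>i\<in>UNIV. \<Sum>b\<in>UNIV. \<Sum>j\<in>UNIV. vee4 xi X a i b j * P$a$i * P$b$j)
      = (\<Sum>b\<in>UNIV. \<Sum>i\<in>UNIV. \<Sum>j\<in>UNIV. vee4 xi X a i b j * P$a$i * P$b$j)" for a
    by (rule sum.swap)
  also have "\<dots> a = (\<Sum>b\<in>UNIV. (xi$a * (P$a \<bullet> (X$b *v P$b)) + xi$b * (P$a \<bullet> (X$a *v P$b))) / 2)" for a
    by (simp add: vee4_def inner_vec_def matrix_vector_mult_def sum_distrib_left sum_distrib_right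
        sum_divide_distrib add_divide_distrib sum.distrib algebra_simps)
  finally show ?thesis
    by simp
qed

lemma vee4_form_simple_tensor:
  "(\<Sum>a\<in>UNIV. \<Sum>i\<in>UNIV. \<Sum>b\<in>UNIV. \<Sum>j\<in>UNIV. vee4 xi X a i b j * eta$a * w$i * eta$b * w$j)
     = (xi \<bullet> eta) * (eta \<bullet> array_form X w)"
proof -
  define P :: "real^_^_" where "P = (\<chi> a. eta$a *\<^sub>R w)"
  have "(\<Sum>a\<in>UNIV. \<Sum>i\<in>UNIV. \<Sum>b\<in>UNIV. \<Sum>j\<in>UNIV. vee4 xi X a i b j * eta$a * w$i * eta$b * w$j)
      = (\<Sum>a\<in>UNIV. \<Sum>i\<in>UNIV. \<Sum>b\<in>UNIV. \<Sum>j\<in>UNIV. vee4 xi X a i b j * P$a$i * P$b$j)"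
    by (simp add: P_def mult_ac)
  also have "\<dots> = (\<Sum>a\<in>UNIV. \<Sum>b\<in>UNIV. (xi$a * eta$a) * (eta$b * array_form X w $ b)
                                       + (eta$a * array_form X w $ a) * (xi$b * eta$b)) / 2"
    unfolding vee4_form_eq_rows
    by (simp add: P_def array_form_def matrix_vector_mult_scaleR sum_divide_distrib mult_ac)
  also have "\<dots> = ((xi \<bullet> eta) * (eta \<bullet> array_form X w) + (eta \<bullet> array_form X w) * (xi \<bullet> eta)) / 2"
    by (simp only: inner_vec_def inner_real_def sum.distrib sum_product)
  finally show ?thesis
    by simp
qed

lemma vee4_form_otimes_vm:
  fixes P :: "real^'n^'N"
  shows "(\<Sum>a\<in>UNIV. \<Sum>i\<in>UNIV. \<Sum>b\<in>UNIV. \<Sum>j\<in>UNIV. vee4 xi (otimes_vm xi A) a i b j * P$a$i * P$b$j)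
       = (xi v* P) \<bullet> (A *v (xi v* P))"
proof -
  have rows: "xi v* P = (\<Sum>a\<in>UNIV. xi$a *\<^sub>R P$a)"
    by (simp add: vec_eq_iff vector_matrix_mult_def mult.commute)
  have "otimes_vm xi A $ b = xi$b *\<^sub>R A" for b
    by (simp add: vec_eq_iff otimes_vm_def)
  then show ?thesis
    by (simp add: vee4_form_eq_rows rows inner_sum_left inner_sum_right linear_sum[OF matrix_vector_mul_linear]
        scaleR_matrix_vector_assoc[symmetric] matrix_vector_mult_scaleR)
      (subst sum.swap, simp add: sum_distrib_left mult_ac)
qed

lemma symmetric_matrix_eq_0:
  fixes B :: "real^'n^'n"
  assumes "transpose B = B" and "\<And>w. w \<bullet> (B *v w) = 0"
  shows "B = 0"
proof -
  have "x \<bullet> (B *v y) = 0" for x y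
  proof -
    have "y \<bullet> (B *v x) = x \<bullet> (B *v y)"
      by (metis assms(1) dot_lmul_matrix inner_commute vector_transpose_matrix)
    then show ?thesis
      using assms(2)[of "x + y"] assms(2)[of x] assms(2)[of y]
      by (simp add: inner_add_left inner_add_right matrix_vector_right_distrib)
  qed
  then have "B *v y = 0" for y
    using inner_eq_zero_iff by blast
  then show ?thesis
    by (simp add: matrix_eq)
qed

lemma tensor_nonpos_imp_otimes:
  assumes "tensor_nonpos T"
  shows "tensor_nonpos_otimes T"
  unfolding tensor_nonpos_otimes_def
proof (intro allI)
  fix eta w
  show "(\<Sum>a\<in>UNIV. \<Sum>i\<in>UNIV. \<Sum>b\<in>UNIV. \<Sum>j\<in>UNIV. T a i b j * eta$a * w$i * eta$b * w$j) \<le> 0"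
    using assms[unfolded tensor_nonpos_def, rule_format, of "\<chi> a i. eta$a * w$i"]
    by (simp add: mult.assoc)
qed

lemma tensor_nonpos_vee4_otimes_vm:
  assumes "mat_nonpos A"
  shows "tensor_nonpos (vee4 xi (otimes_vm xi A))"
  using assms by (simp add: tensor_nonpos_def mat_nonpos_def vee4_form_otimes_vm)

lemma tensor_nonpos_otimes_vee4_imp_otimes_vm:
  fixes eta :: "real^'N" and X :: "real^'n^'n^'N"
  assumes "eta \<noteq> 0" and "sym_array X" and "tensor_nonpos_otimes (vee4 eta X)"
  shows "\<exists>A. X = otimes_vm eta A \<and> mat_nonpos A"
proof -
  have "mat_nonpos (vee eta (array_form X w))" for w
    using assms(3) unfolding mat_nonpos_def inner_vee_mult tensor_nonpos_otimes_def vee4_form_simple_tensor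
    by (metis inner_commute)
  then have "\<forall>w. \<exists>c. c \<le> 0 \<and> array_form X w = c *\<^sub>R eta"
    using mat_nonpos_vee_iff[OF assms(1)] by blast
  then obtain c where c_nonpos: "c w \<le> 0" and c: "array_form X w = c w *\<^sub>R eta" for w
    by metis
  define A where "A = (1 / (eta \<bullet> eta)) *\<^sub>R xi_top eta X"
  have form_A: "w \<bullet> (A *v w) = c w" for w
    using assms(1) by (simp add: A_def inner_xi_top_mult c flip: scaleR_matrix_vector_assoc)
  have "X$b = eta$b *\<^sub>R A" for b
  proof -
    have "transpose (X$b - eta$b *\<^sub>R A) = X$b - eta$b *\<^sub>R A"
      using assms(2) by (simp add: vec_eq_iff transpose_def A_def xi_top_def sym_array_def)
    moreover have "w \<bullet> ((X$b - eta$b *\<^sub>R A) *v w) = 0" for w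
      using arg_cong[where f = "\<lambda>u. u $ b", OF c[of w]]
      by (simp add: array_form_def matrix_vector_mult_diff_rdistrib inner_diff_right form_A
          flip: scaleR_matrix_vector_assoc)
    ultimately show ?thesis
      using symmetric_matrix_eq_0 by (metis eq_iff_diff_eq_0)
  qed
  then have "X = otimes_vm eta A"
    by (simp add: vec_eq_iff otimes_vm_def)
  moreover have "mat_nonpos A"
    using form_A c_nonpos by (simp add: mat_nonpos_def)
  ultimately show ?thesis
    by blast
qed

lemma
  fixes eta :: "real^'N" and X :: "real^'n^'n^'N"
  assumes "eta \<noteq> 0" and "sym_array X"
  shows tensor_nonpos_otimes_vee4_iff: "tensor_nonpos_otimes (vee4 eta X) \<longleftrightarrow> (\<exists>A. X = otimes_vm eta A \<and> mat_nonpos A)"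
    and tensor_nonpos_vee4_iff: "tensor_nonpos (vee4 eta X) \<longleftrightarrow> (\<exists>A. X = otimes_vm eta A \<and> mat_nonpos A)"
  using tensor_nonpos_otimes_vee4_imp_otimes_vm[OF assms] tensor_nonpos_vee4_otimes_vm
    tensor_nonpos_imp_otimes by metis+

lemma unit_otimes_vm_nonpos_iff:
  fixes xi :: "real^'N" and X :: "real^'n^'n^'N"
  assumes "norm xi = 1"
  shows "(\<exists>A. X = otimes_vm xi A \<and> mat_nonpos A)
     \<longleftrightarrow> X = otimes_vm xi (xi_top xi X) \<and> mat_nonpos (xi_top xi X)"
proof
  assume "\<exists>A. X = otimes_vm xi A \<and> mat_nonpos A"
  then obtain A where "X = otimes_vm xi A" and "mat_nonpos A"
    by blast
  then show "X = otimes_vm xi (xi_top xi X) \<and> mat_nonpos (xi_top xi X)"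
    using assms by (simp add: xi_top_otimes_vm norm_eq_1)
qed blast

lemma tensor_nonpos_otimes_vee4_iff_tensor_nonpos:
  fixes eta :: "real^'N" and Y :: "real^'n^'n^'N"
  assumes "sym_array Y"
  shows "tensor_nonpos_otimes (vee4 eta Y) \<longleftrightarrow> tensor_nonpos (vee4 eta Y)"
proof (cases "eta = 0")
  case True
  then show ?thesis
    by (simp add: tensor_nonpos_otimes_def tensor_nonpos_def vee4_def)
next
  case False
  then show ?thesis
    using tensor_nonpos_otimes_vee4_iff tensor_nonpos_vee4_iff assms by blast
qed

theorem proposition14:
  fixes xi :: "real^'N"
  assumes "norm xi = 1"
  shows
   "(\<forall>v :: real^'N.
       (mat_nonpos (vee xi v) \<longleftrightarrow> (v = (xi \<bullet> v) *\<^sub>R xi \<and> xi \<bullet> v \<le> 0))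
     \<and> ((v = (xi \<bullet> v) *\<^sub>R xi \<and> xi \<bullet> v \<le> 0) \<longleftrightarrow> (xi_perp_mat xi *v v = 0 \<and> xi \<bullet> v \<le> 0))
     \<and> ((xi_perp_mat xi *v v = 0 \<and> xi \<bullet> v \<le> 0) \<longleftrightarrow> v = - (norm v *\<^sub>R xi)))
    \<and> (\<forall>X :: real^'n^'n^'N. sym_array X \<longrightarrow>
       (tensor_nonpos_otimes (vee4 xi X) \<longleftrightarrow>
          (X = otimes_vm xi (xi_top xi X) \<and> mat_nonpos (xi_top xi X)))
     \<and> ((X = otimes_vm xi (xi_top xi X) \<and> mat_nonpos (xi_top xi X)) \<longleftrightarrow>
          (xi_perp_arr xi X = 0 \<and> mat_nonpos (xi_top xi X)))
     \<and> ((xi_perp_arr xi X = 0 \<and> mat_nonpos (xi_top xi X)) \<longleftrightarrow>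
          tensor_nonpos (vee4 xi X)))
    \<and> (\<forall>(eta :: real^'N) (Y :: real^'n^'n^'N). sym_array Y \<longrightarrow>
       (tensor_nonpos_otimes (vee4 eta Y) \<longleftrightarrow> tensor_nonpos (vee4 eta Y)))"
proof -
  have xi: "xi \<noteq> 0"
    using assms by auto
  have perp_mat: "xi_perp_mat xi *v v = 0 \<longleftrightarrow> v = (xi \<bullet> v) *\<^sub>R xi" for v
    by (simp add: xi_perp_mat_mult)
  have perp_arr: "xi_perp_arr xi X = 0 \<longleftrightarrow> X = otimes_vm xi (xi_top xi X)" for X :: "real^'n^'n^'N"
    by (simp add: xi_perp_arr_eq)
  have vector_part: "mat_nonpos (vee xi v) \<longleftrightarrow> v = (xi \<bullet> v) *\<^sub>R xi \<and> xi \<bullet> v \<le> 0" for v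
    using mat_nonpos_vee_iff[OF xi] unit_nonpos_multiple_iff[OF assms] by simp
  have array_part:
    "tensor_nonpos_otimes (vee4 xi X) \<longleftrightarrow> X = otimes_vm xi (xi_top xi X) \<and> mat_nonpos (xi_top xi X)"
    "tensor_nonpos (vee4 xi X) \<longleftrightarrow> X = otimes_vm xi (xi_top xi X) \<and> mat_nonpos (xi_top xi X)"
    if "sym_array X" for X :: "real^'n^'n^'N"
    using tensor_nonpos_otimes_vee4_iff[OF xi that] tensor_nonpos_vee4_iff[OF xi that]
      unit_otimes_vm_nonpos_iff[OF assms] by simp_all
  show ?thesis
    by (intro conjI allI impI)
      (simp_all only: vector_part perp_mat unit_nonpos_multiple_iff_neg_norm[OF assms]
        array_part perp_arr tensor_nonpos_otimes_vee4_iff_tensor_nonpos)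
qed

end
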